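(* Let $\omega_1\ne\omega_2$ be real, let $a$ be a real polynomial of degree $N-1\ge1$, and let $q_1,q_2,C_1,C_2\in\mathbb C$ satisfy, for all $t\in\mathbb R$, $$e^{-i\omega_1t}C_1+e^{-i\omega_2t}C_2=a\big(|q_1e^{-i\omega_1t}+q_2e^{-i\omega_2t}|^2\big)\big(q_1e^{-i\omega_1t}+q_2e^{-i\omega_2t}\big).$$ Then $q_1=0$ or $q_2=0$. *)

theory Defs
  imports "HOL-Analysis.Analysis" "HOL-Computational_Algebra.Polynomial"
begin

end

theory Submission
  imports Defs
begin

text \<open>
  For \<open>z = exp (\<i> (\<omega>1 - \<omega>2) t)\<close>, which runs through the whole unit circle, the hypothesis
  becomes \<open>C1 + z C2 = a (\<bar>q1 + q2 z\<bar>\<^sup>2) (q1 + q2 z)\<close>, and on the circle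
  \<open>z \<bar>q1 + q2 z\<bar>\<^sup>2 = S z\<close> for the quadratic polynomial
  \<open>S = q1 cnj q2 + (\<bar>q1\<bar>\<^sup>2 + \<bar>q2\<bar>\<^sup>2) z + cnj q1 q2 z\<^sup>2\<close>.
  Multiplying by \<open>z ^ d\<close> with \<open>d = degree a\<close> gives the identity
  \<open>z ^ d (C1 + C2 z) = (\<Sum>k\<le>d. a\<^sub>k z ^ (d - k) S(z) ^ k) (q1 + q2 z)\<close>
  between polynomials on the circle, hence everywhere. The left side has degree at most \<open>d + 1\<close>;
  if \<open>q1 q2 \<noteq> 0\<close> then \<open>S\<close> has degree 2 and the right side has degree \<open>2 d + 1\<close>,
  which is impossible for \<open>d \<ge> 1\<close>.
\<close>

text \<open>\<open>homog_pcompose p s\<close> is \<open>z ^ degree p * p (s z / z)\<close>, written without division.\<close>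

definition homog_pcompose :: "'a::comm_semiring_1 poly \<Rightarrow> 'a poly \<Rightarrow> 'a poly" where
  "homog_pcompose p s = (\<Sum>k\<le>degree p. smult (coeff p k) (monom 1 (degree p - k) * s ^ k))"

lemma poly_homog_pcompose:
  assumes "poly s z = z * y"
  shows "poly (homog_pcompose p s) z = z ^ degree p * poly p y"
proof -
  have "poly (homog_pcompose p s) z = (\<Sum>k\<le>degree p. coeff p k * (z ^ (degree p - k) * (z * y) ^ k))"
    by (simp add: homog_pcompose_def poly_sum poly_monom assms)
  also have "\<dots> = (\<Sum>k\<le>degree p. z ^ degree p * (coeff p k * y ^ k))"
  proof (rule sum.cong)
    fix k assume "k \<in> {..degree p}"
    hence "z ^ degree p = z ^ (degree p - k) * z ^ k" by (simp flip: power_add)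
    thus "coeff p k * (z ^ (degree p - k) * (z * y) ^ k) = z ^ degree p * (coeff p k * y ^ k)"
      by (simp add: power_mult_distrib ac_simps)
  qed simp
  finally show ?thesis by (simp add: poly_altdef sum_distrib_left)
qed

lemma degree_homog_pcompose_le:
  assumes "degree s \<ge> 1"
  shows "degree (homog_pcompose p s) \<le> degree s * degree p"
  unfolding homog_pcompose_def
proof (intro degree_sum_le)
  fix k assume "k \<in> {..degree p}"
  with assms have "degree p - k \<le> degree s * (degree p - k)"
    and "degree s * degree p = degree s * k + degree s * (degree p - k)"
    by (simp_all flip: distrib_left)
  hence "degree p - k + degree s * k \<le> degree s * degree p" by linarith
  moreover have "degree (monom 1 (degree p - k) * s ^ k) \<le> degree p - k + degree s * k"
    by (rule order.trans[OF degree_mult_le add_mono[OF degree_monom_le degree_power_le]])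
  ultimately show "degree (smult (coeff p k) (monom 1 (degree p - k) * s ^ k)) \<le> degree s * degree p"
    using degree_smult_le[of "coeff p k" "monom 1 (degree p - k) * s ^ k"] by linarith
qed simp

lemma coeff_homog_pcompose_top:
  fixes p s :: "'a::idom poly"
  assumes "degree s > 1"
  shows "coeff (homog_pcompose p s) (degree s * degree p) = lead_coeff p * lead_coeff s ^ degree p"
proof -
  define d m where "d = degree p" and "m = degree s"
  let ?c = "\<lambda>k. coeff p k * coeff (s ^ k) (m * d - (d - k))"
  have "coeff (homog_pcompose p s) (m * d) = (\<Sum>k\<le>d. ?c k)"
    unfolding homog_pcompose_def coeff_sum d_def m_def
  proof (intro sum.cong refl)
    fix k
    have "degree p \<le> degree s * degree p" using assms by simp
    hence "\<not> degree s * degree p < degree p - k" by linarith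
    then show "coeff (smult (coeff p k) (monom 1 (degree p - k) * s ^ k)) (degree s * degree p)
        = coeff p k * coeff (s ^ k) (degree s * degree p - (degree p - k))"
      by (simp add: coeff_monom_mult)
  qed
  also have "\<dots> = ?c d + (\<Sum>k\<in>{..d} - {d}. ?c k)"
    by (rule sum.remove) auto
  also have "(\<Sum>k\<in>{..d} - {d}. ?c k) = 0"
  proof (rule sum.neutral, rule ballI)
    fix k assume "k \<in> {..d} - {d}"
    hence "k < d" by auto
    hence "d - k < m * (d - k)" using assms by (simp add: m_def)
    moreover have "m * d = m * k + m * (d - k)"
      using \<open>k < d\<close> by (simp flip: distrib_left)
    ultimately have "m * k < m * d - (d - k)" by linarith
    hence "degree (s ^ k) < m * d - (d - k)"
      using degree_power_le[of s k] by (simp add: m_def mult.commute)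
    thus "?c k = 0" by (simp add: coeff_eq_0)
  qed
  also have "?c d = coeff p d * lead_coeff s ^ d"
  proof -
    have "s \<noteq> 0" using assms by auto
    hence "degree (s ^ d) = m * d" by (simp add: degree_power_eq m_def)
    thus ?thesis by (simp flip: lead_coeff_power)
  qed
  finally show ?thesis unfolding d_def m_def by simp
qed

lemma degree_homog_pcompose:
  fixes p s :: "'a::idom poly"
  assumes "degree s > 1" and "p \<noteq> 0"
  shows "degree (homog_pcompose p s) = degree s * degree p"
proof (rule antisym)
  show "degree (homog_pcompose p s) \<le> degree s * degree p"
    using assms(1) by (intro degree_homog_pcompose_le) simp
  have "lead_coeff s \<noteq> 0" using assms(1) by auto
  with assms(2) show "degree s * degree p \<le> degree (homog_pcompose p s)"
    by (intro le_degree) (simp add: coeff_homog_pcompose_top[OF assms(1)])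
qed

lemma infinite_unit_circle: "infinite (sphere (0::complex) 1)"
proof
  assume "finite (sphere (0::complex) 1)"
  moreover have "connected (sphere (0::complex) 1)" by (rule connected_sphere) simp
  ultimately have "sphere (0::complex) 1 = {} \<or> (\<exists>a. sphere (0::complex) 1 = {a})"
    using connected_finite_iff_sing by blast
  moreover have "1 \<in> sphere (0::complex) 1" and "-1 \<in> sphere (0::complex) 1" by simp_all
  ultimately show False by (metis empty_iff one_neq_neg_one singletonD)
qed

lemma poly_eq_on_unit_circle:
  fixes p q :: "complex poly"
  assumes "\<And>z. cmod z = 1 \<Longrightarrow> poly p z = poly q z"
  shows "p = q"
proof (rule ccontr)
  assume "p \<noteq> q"
  hence "finite {z. poly (p - q) z = 0}" by (intro poly_roots_finite) simp
  moreover have "sphere 0 1 \<subseteq> {z. poly (p - q) z = 0}" using assms by auto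
  ultimately show False using infinite_unit_circle finite_subset by blast
qed

lemma phase_difference_attained:
  assumes "\<omega>1 \<noteq> \<omega>2" and "cmod z = 1"
  obtains t where "exp (- \<i> * of_real (\<omega>2 * t)) = exp (- \<i> * of_real (\<omega>1 * t)) * z"
proof
  define t where "t = Arg z / (\<omega>1 - \<omega>2)"
  have "z \<noteq> 0" using assms(2) by auto
  hence "z = exp (\<i> * of_real ((\<omega>1 - \<omega>2) * t))"
    using assms cis_Arg[of z] by (auto simp: t_def cis_conv_exp sgn_div_norm)
  thus "exp (- \<i> * of_real (\<omega>2 * t)) = exp (- \<i> * of_real (\<omega>1 * t)) * z"
    by (simp add: exp_add[symmetric] algebra_simps)
qed

definition circle_norm_poly :: "complex \<Rightarrow> complex \<Rightarrow> complex poly" where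
  "circle_norm_poly q1 q2 = [:q1 * cnj q2, q1 * cnj q1 + q2 * cnj q2, cnj q1 * q2:]"

lemma poly_circle_norm_poly:
  assumes "cmod z = 1"
  shows "poly (circle_norm_poly q1 q2) z = z * of_real ((cmod (q1 + q2 * z))\<^sup>2)"
proof -
  have "z \<noteq> 0" using assms by auto
  moreover have "z * cnj z = 1" using assms complex_norm_square[of z] by simp
  ultimately have "cnj z = 1 / z" by (simp add: eq_divide_eq mult.commute)
  have "of_real ((cmod (q1 + q2 * z))\<^sup>2) = (q1 + q2 * z) * cnj (q1 + q2 * z)"
    by (rule complex_norm_square)
  also have "\<dots> = q1 * cnj q1 + q2 * cnj q2 + q1 * cnj q2 / z + cnj q1 * q2 * z"
    using \<open>z \<noteq> 0\<close> by (simp add: \<open>cnj z = 1 / z\<close> field_simps)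
  finally show ?thesis using \<open>z \<noteq> 0\<close> by (simp add: circle_norm_poly_def field_simps)
qed

lemma degree_circle_norm_poly: "q1 \<noteq> 0 \<Longrightarrow> q2 \<noteq> 0 \<Longrightarrow> degree (circle_norm_poly q1 q2) = 2"
  by (simp add: circle_norm_poly_def)

lemma poly_map_poly_of_real:
  "poly (map_poly of_real p) (of_real x) = (of_real (poly p x) :: 'a::{real_algebra_1,comm_ring_1})"
  by (induction p) (auto simp: map_poly_pCons)

lemma two_frequency_identity_on_unit_circle:
  fixes \<omega>1 \<omega>2 :: real and F :: "real \<Rightarrow> complex" and q1 q2 C1 C2 z :: complex
  assumes "\<omega>1 \<noteq> \<omega>2" and "cmod z = 1"
    and "\<And>t::real. exp (- \<i> * of_real (\<omega>1 * t)) * C1 + exp (- \<i> * of_real (\<omega>2 * t)) * C2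
          = F ((cmod (q1 * exp (- \<i> * of_real (\<omega>1 * t)) + q2 * exp (- \<i> * of_real (\<omega>2 * t))))\<^sup>2)
            * (q1 * exp (- \<i> * of_real (\<omega>1 * t)) + q2 * exp (- \<i> * of_real (\<omega>2 * t)))"
  shows "C1 + z * C2 = F ((cmod (q1 + q2 * z))\<^sup>2) * (q1 + q2 * z)"
proof -
  obtain t where t: "exp (- \<i> * of_real (\<omega>2 * t)) = exp (- \<i> * of_real (\<omega>1 * t)) * z"
    using phase_difference_attained[OF assms(1,2)] .
  define e where "e = exp (- \<i> * of_real (\<omega>1 * t))"
  have "q1 * e + q2 * (e * z) = e * (q1 + q2 * z)" by (simp add: algebra_simps)
  moreover have "cmod e = 1" by (simp add: e_def)
  ultimately have "cmod (q1 * e + q2 * (e * z)) = cmod (q1 + q2 * z)" by (simp add: norm_mult)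
  with assms(3)[of t] have "e * (C1 + z * C2) = e * (F ((cmod (q1 + q2 * z))\<^sup>2) * (q1 + q2 * z))"
    unfolding t e_def[symmetric] by (simp add: algebra_simps)
  moreover have "e \<noteq> 0" by (simp add: e_def)
  ultimately show ?thesis by simp
qed

lemma unit_circle_identity_poly_eq:
  fixes a :: "real poly" and q1 q2 C1 C2 :: complex
  assumes "\<And>z. cmod z = 1 \<Longrightarrow> C1 + z * C2 = of_real (poly a ((cmod (q1 + q2 * z))\<^sup>2)) * (q1 + q2 * z)"
  shows "monom 1 (degree a) * [:C1, C2:]
    = homog_pcompose (map_poly of_real a) (circle_norm_poly q1 q2) * [:q1, q2:]"
proof (rule poly_eq_on_unit_circle)
  fix z :: complex assume z: "cmod z = 1"
  define x where "x = (cmod (q1 + q2 * z))\<^sup>2"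
  define A where "A = map_poly complex_of_real a"
  have "degree A = degree a" by (simp add: A_def degree_map_poly)
  have "poly (homog_pcompose A (circle_norm_poly q1 q2)) z = z ^ degree A * poly A (of_real x)"
    using poly_circle_norm_poly[OF z] unfolding x_def by (rule poly_homog_pcompose)
  hence homog: "poly (homog_pcompose A (circle_norm_poly q1 q2)) z = z ^ degree a * of_real (poly a x)"
    unfolding \<open>degree A = degree a\<close> by (simp add: A_def poly_map_poly_of_real)
  have "poly (monom 1 (degree a) * [:C1, C2:]) z = z ^ degree a * (C1 + z * C2)"
    by (simp add: poly_monom algebra_simps)
  also have "C1 + z * C2 = of_real (poly a x) * (q1 + q2 * z)"
    unfolding x_def by (rule assms[OF z])
  also have "z ^ degree a * (of_real (poly a x) * (q1 + q2 * z))
      = poly (homog_pcompose A (circle_norm_poly q1 q2) * [:q1, q2:]) z"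
    by (simp add: homog algebra_simps)
  finally show "poly (monom 1 (degree a) * [:C1, C2:]) z
      = poly (homog_pcompose (map_poly of_real a) (circle_norm_poly q1 q2) * [:q1, q2:]) z"
    by (simp add: A_def)
qed

theorem mainTheorem3:
  fixes \<omega>1 \<omega>2 :: real and N :: nat and a :: "real poly"
    and q1 q2 C1 C2 :: complex
  assumes "\<omega>1 \<noteq> \<omega>2"
    and "degree a = N - 1" and "N - 1 \<ge> 1"
    and "\<And>t::real. exp (- \<i> * of_real (\<omega>1 * t)) * C1 + exp (- \<i> * of_real (\<omega>2 * t)) * C2
          = of_real (poly a ((cmod (q1 * exp (- \<i> * of_real (\<omega>1 * t)) + q2 * exp (- \<i> * of_real (\<omega>2 * t))))\<^sup>2))
            * (q1 * exp (- \<i> * of_real (\<omega>1 * t)) + q2 * exp (- \<i> * of_real (\<omega>2 * t)))"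
  shows "q1 = 0 \<or> q2 = 0"
proof (rule ccontr)
  assume "\<not> (q1 = 0 \<or> q2 = 0)"
  hence "q1 \<noteq> 0" and "q2 \<noteq> 0" by auto
  define d where "d = degree a"
  define H where "H = homog_pcompose (map_poly complex_of_real a) (circle_norm_poly q1 q2)"
  have "d \<ge> 1" using assms(2,3) by (simp add: d_def)
  have "monom 1 d * [:C1, C2:] = H * [:q1, q2:]"
    unfolding d_def H_def
    by (intro unit_circle_identity_poly_eq two_frequency_identity_on_unit_circle[OF assms(1) _ assms(4)])
  moreover have "degree (monom 1 d * [:C1, C2:]) \<le> d + 1"
    by (rule order.trans[OF degree_mult_le add_mono[OF degree_monom_le]]) simp
  moreover have "degree H = 2 * d"
    unfolding H_def using \<open>d \<ge> 1\<close> \<open>q1 \<noteq> 0\<close> \<open>q2 \<noteq> 0\<close>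
    by (subst degree_homog_pcompose) (auto simp: d_def degree_circle_norm_poly degree_map_poly map_poly_eq_0_iff)
  hence "degree (H * [:q1, q2:]) = 2 * d + 1"
    using \<open>d \<ge> 1\<close> \<open>q2 \<noteq> 0\<close> by (subst degree_mult_eq) auto
  ultimately show False using \<open>d \<ge> 1\<close> by simp
qed

end
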